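(* Let $G$ be a finite group, $D$ a Dedekind domain of characteristic $0$, and $A$ a $DG$-module which is a $P$-module for some maximal ideal $P$ of $D$. If $\mathrm{char}(D/P)=0$ and $\mathrm{sr}_{DG}(A)=r\in\mathbb{N}$, then $A$ is an Artinian $D$-module.
   Context: $A$ is a $P$-module if for every $a\in A$ there is $n\in\mathbb{N}$ with $aP^n=0$. A generating subset of a submodule is minimal if no proper subset generates it; $\mathrm{sr}_{DG}(A)=r$ means every finitely generated $DG$-submodule of $A$ can be generated by $r$ elements and some finitely generated $DG$-submodule has a minimal generating subset of exactly $r$ elements. *)

theory Defs
  imports Complex_Main "HOL-Algebra.Group"
begin

definition is_ideal :: "'d::comm_ring_1 set \<Rightarrow> bool" where
  "is_ideal I \<longleftrightarrow> 0 \<in> I \<and> (\<forall>x\<in>I. \<forall>y\<in>I. x + y \<in> I) \<and> (\<forall>r. \<forall>x\<in>I. r * x \<in> I)"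

definition prime_ideal :: "'d::comm_ring_1 set \<Rightarrow> bool" where
  "prime_ideal P \<longleftrightarrow> is_ideal P \<and> P \<noteq> UNIV \<and> (\<forall>a b. a * b \<in> P \<longrightarrow> a \<in> P \<or> b \<in> P)"

definition maximal_ideal :: "'d::comm_ring_1 set \<Rightarrow> bool" where
  "maximal_ideal P \<longleftrightarrow> is_ideal P \<and> P \<noteq> UNIV \<and>
     (\<forall>I. is_ideal I \<and> P \<subseteq> I \<longrightarrow> I = P \<or> I = UNIV)"

definition ideal_gen :: "'d::comm_ring_1 set \<Rightarrow> 'd set" where
  "ideal_gen S = \<Inter>{I. is_ideal I \<and> S \<subseteq> I}"

primrec ideal_pow :: "'d::comm_ring_1 set \<Rightarrow> nat \<Rightarrow> 'd set" where
  "ideal_pow P 0 = UNIV"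
| "ideal_pow P (Suc n) = ideal_gen {x * y | x y. x \<in> P \<and> y \<in> ideal_pow P n}"

definition residue_char_zero :: "'d::comm_ring_1 set \<Rightarrow> bool" where
  "residue_char_zero P \<longleftrightarrow> (\<forall>n::nat. n > 0 \<longrightarrow> of_nat n \<notin> P)"

definition noetherian_ring :: "'d::comm_ring_1 itself \<Rightarrow> bool" where
  "noetherian_ring _ \<longleftrightarrow> (\<forall>I::'d set. is_ideal I \<longrightarrow> (\<exists>S. finite S \<and> ideal_gen S = I))"

text \<open>Integrally closed in the field of fractions, with denominators cleared:
  if \<open>x/y\<close> (\<open>y \<noteq> 0\<close>) is a root of a monic polynomial over \<open>D\<close>, then \<open>x/y \<in> D\<close>.\<close>
definition integrally_closed :: "'d::idom itself \<Rightarrow> bool" where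
  "integrally_closed _ \<longleftrightarrow>
     (\<forall>x y :: 'd. \<forall>n::nat. \<forall>c :: nat \<Rightarrow> 'd.
        y \<noteq> 0 \<and> n > 0 \<and> x ^ n + (\<Sum>i<n. c i * x ^ i * y ^ (n - i)) = 0 \<longrightarrow> y dvd x)"

text \<open>Dedekind domain: Noetherian, integrally closed domain of Krull dimension one
  (nonzero primes are maximal, and the ring is not a field).\<close>
definition dedekind_domain :: "'d::idom itself \<Rightarrow> bool" where
  "dedekind_domain T \<longleftrightarrow> noetherian_ring T \<and> integrally_closed T \<and>
     (\<forall>P::'d set. prime_ideal P \<and> P \<noteq> {0} \<longrightarrow> maximal_ideal P) \<and>
     (\<exists>P::'d set. prime_ideal P \<and> P \<noteq> {0})"

definition DG_module ::
  "('d::comm_ring_1 \<Rightarrow> 'a::ab_group_add \<Rightarrow> 'a) \<Rightarrow> ('g, 'm) monoid_scheme \<Rightarrow> ('g \<Rightarrow> 'a \<Rightarrow> 'a) \<Rightarrow> bool" where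
  "DG_module scale G \<rho> \<longleftrightarrow> module scale \<and> group G \<and>
     (\<forall>g\<in>carrier G. \<forall>a b. \<rho> g (a + b) = \<rho> g a + \<rho> g b) \<and>
     (\<forall>g\<in>carrier G. \<forall>d a. \<rho> g (scale d a) = scale d (\<rho> g a)) \<and>
     (\<forall>a. \<rho> \<one>\<^bsub>G\<^esub> a = a) \<and>
     (\<forall>g\<in>carrier G. \<forall>h\<in>carrier G. \<forall>a. \<rho> (g \<otimes>\<^bsub>G\<^esub> h) a = \<rho> g (\<rho> h a))"

definition DG_submodule ::
  "('d::comm_ring_1 \<Rightarrow> 'a::ab_group_add \<Rightarrow> 'a) \<Rightarrow> ('g, 'm) monoid_scheme \<Rightarrow> ('g \<Rightarrow> 'a \<Rightarrow> 'a) \<Rightarrow> 'a set \<Rightarrow> bool" where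
  "DG_submodule scale G \<rho> B \<longleftrightarrow> module.subspace scale B \<and> (\<forall>g\<in>carrier G. \<forall>b\<in>B. \<rho> g b \<in> B)"

definition DG_span ::
  "('d::comm_ring_1 \<Rightarrow> 'a::ab_group_add \<Rightarrow> 'a) \<Rightarrow> ('g, 'm) monoid_scheme \<Rightarrow> ('g \<Rightarrow> 'a \<Rightarrow> 'a) \<Rightarrow> 'a set \<Rightarrow> 'a set" where
  "DG_span scale G \<rho> S = \<Inter>{B. DG_submodule scale G \<rho> B \<and> S \<subseteq> B}"

definition DG_fin_gen ::
  "('d::comm_ring_1 \<Rightarrow> 'a::ab_group_add \<Rightarrow> 'a) \<Rightarrow> ('g, 'm) monoid_scheme \<Rightarrow> ('g \<Rightarrow> 'a \<Rightarrow> 'a) \<Rightarrow> 'a set \<Rightarrow> bool" where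
  "DG_fin_gen scale G \<rho> B \<longleftrightarrow> DG_submodule scale G \<rho> B \<and> (\<exists>S. finite S \<and> DG_span scale G \<rho> S = B)"

definition DG_minimal_gen ::
  "('d::comm_ring_1 \<Rightarrow> 'a::ab_group_add \<Rightarrow> 'a) \<Rightarrow> ('g, 'm) monoid_scheme \<Rightarrow> ('g \<Rightarrow> 'a \<Rightarrow> 'a) \<Rightarrow> 'a set \<Rightarrow> 'a set \<Rightarrow> bool" where
  "DG_minimal_gen scale G \<rho> S B \<longleftrightarrow> DG_span scale G \<rho> S = B \<and> (\<forall>T. T \<subset> S \<longrightarrow> DG_span scale G \<rho> T \<noteq> B)"

definition sr_DG_eq ::
  "('d::comm_ring_1 \<Rightarrow> 'a::ab_group_add \<Rightarrow> 'a) \<Rightarrow> ('g, 'm) monoid_scheme \<Rightarrow> ('g \<Rightarrow> 'a \<Rightarrow> 'a) \<Rightarrow> nat \<Rightarrow> bool" where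
  "sr_DG_eq scale G \<rho> r \<longleftrightarrow>
     (\<forall>B. DG_fin_gen scale G \<rho> B \<longrightarrow> (\<exists>S. finite S \<and> card S \<le> r \<and> DG_span scale G \<rho> S = B)) \<and>
     (\<exists>B S. DG_fin_gen scale G \<rho> B \<and> DG_minimal_gen scale G \<rho> S B \<and> finite S \<and> card S = r)"

definition P_module :: "('d::comm_ring_1 \<Rightarrow> 'a::ab_group_add \<Rightarrow> 'a) \<Rightarrow> 'd set \<Rightarrow> bool" where
  "P_module scale P \<longleftrightarrow> (\<forall>a. \<exists>n. \<forall>x\<in>ideal_pow P n. scale x a = 0)"

definition artinian_module :: "('d::comm_ring_1 \<Rightarrow> 'a::ab_group_add \<Rightarrow> 'a) \<Rightarrow> bool" where
  "artinian_module scale \<longleftrightarrow>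
     (\<forall>M :: nat \<Rightarrow> 'a set. (\<forall>n. module.subspace scale (M n) \<and> M (Suc n) \<subseteq> M n) \<longrightarrow>
        (\<exists>N. \<forall>n\<ge>N. M n = M N))"

end

(* Since D is a Dedekind domain, P D_P is principal, generated by some \<pi> in P, so the socle
   A[P] = {a. \<pi> a = 0} is a vector space over D/P. It has dimension at most |G| r: a
   DG-submodule generated by r elements is the D-span of their G-orbit. A descending chain
   M_i of submodules of the P-primary module A is determined by its layers
   \<pi>^n (M_i \<inter> A[\<pi>^(n+1)]), which are subspaces of the socle decreasing in both i and n.
   Finite dimension makes every decreasing sequence of layers stabilize, and a diagonal
   argument makes them stabilize uniformly in n, so the chain M_i stabilizes. *)

theory Submission
  imports Defs
begin

section \<open>Ideals\<close>

lemma is_idealI: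
  assumes "0 \<in> I" "\<And>x y. x \<in> I \<Longrightarrow> y \<in> I \<Longrightarrow> x + y \<in> I" "\<And>r x. x \<in> I \<Longrightarrow> r * x \<in> I"
  shows "is_ideal I"
  using assms unfolding is_ideal_def by blast

lemma is_ideal_zero: "is_ideal I \<Longrightarrow> 0 \<in> I"
  unfolding is_ideal_def by blast

lemma is_ideal_add: "is_ideal I \<Longrightarrow> x \<in> I \<Longrightarrow> y \<in> I \<Longrightarrow> x + y \<in> I"
  unfolding is_ideal_def by blast

lemma is_ideal_mult_left: "is_ideal I \<Longrightarrow> x \<in> I \<Longrightarrow> r * x \<in> I"
  unfolding is_ideal_def by blast

lemma is_ideal_mult_right: "is_ideal I \<Longrightarrow> x \<in> I \<Longrightarrow> x * r \<in> I"
  using is_ideal_mult_left[of I x r] by (simp add: mult.commute)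

lemma ideal_gen_superset: "S \<subseteq> ideal_gen S"
  unfolding ideal_gen_def by blast

lemma ideal_gen_minimal: "is_ideal J \<Longrightarrow> S \<subseteq> J \<Longrightarrow> ideal_gen S \<subseteq> J"
  unfolding ideal_gen_def by blast

lemma power_in_ideal_pow: "p \<in> P \<Longrightarrow> p ^ n \<in> ideal_pow P n"
proof (induction n)
  case (Suc n)
  then have "p * p ^ n \<in> {x * y | x y. x \<in> P \<and> y \<in> ideal_pow P n}"
    by blast
  then have "p * p ^ n \<in> ideal_gen {x * y | x y. x \<in> P \<and> y \<in> ideal_pow P n}"
    by (rule subsetD[OF ideal_gen_superset])
  then show ?case
    by simp
qed simp

lemma maximal_ideal_is_ideal: "maximal_ideal P \<Longrightarrow> is_ideal P"
  unfolding maximal_ideal_def by blast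

lemma maximal_ideal_one_notin: "maximal_ideal P \<Longrightarrow> 1 \<notin> P"
  unfolding maximal_ideal_def using is_ideal_mult_right[of P 1] by auto

lemma maximal_ideal_complement_unit:
  fixes P :: "'d::comm_ring_1 set"
  assumes mP: "maximal_ideal P" and "x \<notin> P"
  shows "\<exists>p\<in>P. \<exists>e. 1 = p + x * e"
proof -
  define Q where "Q = {p + x * e | p e. p \<in> P}"
  have iP: "is_ideal P"
    using mP by (rule maximal_ideal_is_ideal)
  have "is_ideal Q"
  proof (rule is_idealI)
    show "0 \<in> Q"
      unfolding Q_def using is_ideal_zero[OF iP] by (intro CollectI exI[of _ 0]) simp
  next
    fix u v assume "u \<in> Q" "v \<in> Q"
    then obtain p1 e1 p2 e2 where "u = p1 + x * e1" "v = p2 + x * e2" "p1 \<in> P" "p2 \<in> P"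
      unfolding Q_def by blast
    then have "u + v = (p1 + p2) + x * (e1 + e2)" "p1 + p2 \<in> P"
      by (simp_all add: algebra_simps is_ideal_add[OF iP])
    then show "u + v \<in> Q"
      unfolding Q_def by blast
  next
    fix r u assume "u \<in> Q"
    then obtain p e where "u = p + x * e" "p \<in> P"
      unfolding Q_def by blast
    then have "r * u = r * p + x * (r * e)" "r * p \<in> P"
      using is_ideal_mult_left[OF iP] by (auto simp: algebra_simps)
    then show "r * u \<in> Q"
      unfolding Q_def by blast
  qed
  moreover have "P \<subseteq> Q"
  proof
    fix p assume "p \<in> P"
    then show "p \<in> Q"
      unfolding Q_def by (intro CollectI exI[of _ p] exI[of _ 0]) simp
  qed
  moreover have "x \<in> Q"
    unfolding Q_def using is_ideal_zero[OF iP] by (intro CollectI exI[of _ 0] exI[of _ 1]) simp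
  ultimately have "Q = UNIV"
    using mP \<open>x \<notin> P\<close> unfolding maximal_ideal_def by blast
  then show ?thesis
    unfolding Q_def by blast
qed

lemma maximal_ideal_mult_notin:
  fixes P :: "'d::comm_ring_1 set"
  assumes mP: "maximal_ideal P" and "x \<notin> P" "y \<notin> P"
  shows "x * y \<notin> P"
proof
  assume xy: "x * y \<in> P"
  obtain p e where "p \<in> P" "1 = p + x * e"
    using maximal_ideal_complement_unit[OF mP \<open>x \<notin> P\<close>] by blast
  then have "y = p * y + e * (x * y)"
    by (metis mult_1 distrib_right mult.commute mult.left_commute)
  then have "y \<in> P"
    using \<open>p \<in> P\<close> xy maximal_ideal_is_ideal[OF mP]
    by (metis is_ideal_add is_ideal_mult_left is_ideal_mult_right)
  with \<open>y \<notin> P\<close> show False ..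
qed

lemma noetherian_ideal_family_has_maximal:
  fixes F :: "'d::comm_ring_1 set set"
  assumes noeth: "noetherian_ring TYPE('d)" and "F \<noteq> {}" and ideals: "\<And>X. X \<in> F \<Longrightarrow> is_ideal X"
  shows "\<exists>M\<in>F. \<forall>X\<in>F. M \<subseteq> X \<longrightarrow> X = M"
proof (rule subset_Zorn_nonempty[OF \<open>F \<noteq> {}\<close>])
  fix C assume "C \<noteq> {}" and ch: "subset.chain F C"
  then have CF: "C \<subseteq> F" and comparable: "\<And>X Y. X \<in> C \<Longrightarrow> Y \<in> C \<Longrightarrow> X \<subseteq> Y \<or> Y \<subseteq> X"
    unfolding subset_chain_def by blast+
  have "is_ideal (\<Union>C)"
  proof (rule is_idealI)
    show "0 \<in> \<Union>C"
      using \<open>C \<noteq> {}\<close> CF ideals is_ideal_zero by blast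
  next
    fix x y assume "x \<in> \<Union>C" "y \<in> \<Union>C"
    then obtain X Y where "X \<in> C" "Y \<in> C" "x \<in> X" "y \<in> Y"
      by blast
    then show "x + y \<in> \<Union>C"
      using comparable[of X Y] CF ideals is_ideal_add by (metis UnionI subsetD)
  next
    fix r x assume "x \<in> \<Union>C"
    then show "r * x \<in> \<Union>C"
      using CF ideals is_ideal_mult_left by blast
  qed
  then obtain S where "finite S" and S: "ideal_gen S = \<Union>C"
    using noeth unfolding noetherian_ring_def by blast
  then obtain B where "B \<in> C" "S \<subseteq> B"
    using finite_subset_Union_chain[OF \<open>finite S\<close> _ \<open>C \<noteq> {}\<close> ch] ideal_gen_superset by metis
  then have "\<Union>C = B"
    using ideal_gen_minimal[of B S] S CF ideals by blast
  then show "\<Union>C \<in> F"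
    using \<open>B \<in> C\<close> CF by blast
qed

lemma noetherian_mono_ideals_stabilize:
  fixes L :: "nat \<Rightarrow> 'd::comm_ring_1 set"
  assumes "noetherian_ring TYPE('d)" and "\<And>k. is_ideal (L k)" and "mono L"
  shows "\<exists>K. \<forall>k. L k \<subseteq> L K"
proof -
  obtain K where K: "\<forall>X\<in>range L. L K \<subseteq> X \<longrightarrow> X = L K"
    using noetherian_ideal_family_has_maximal[of "range L"] assms(1,2) by blast
  have "L k \<subseteq> L K" for k
  proof -
    have "L K \<subseteq> L (max k K)" "L k \<subseteq> L (max k K)"
      using monoD[OF \<open>mono L\<close>] by simp_all
    then show ?thesis
      using K by blast
  qed
  then show ?thesis
    by blast
qed

section \<open>Maximal ideals of a Dedekind domain are locally principal\<close>

text \<open>\<open>dvd_at P x y\<close>: \<open>x\<close> divides \<open>y\<close> in the localization \<open>D\<^sub>P\<close>.\<close>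
definition dvd_at :: "'d::comm_ring_1 set \<Rightarrow> 'd \<Rightarrow> 'd \<Rightarrow> bool" where
  "dvd_at P x y \<longleftrightarrow> (\<exists>s c. s \<notin> P \<and> s * y = x * c)"

lemma is_ideal_dvd_at:
  assumes mP: "maximal_ideal P"
  shows "is_ideal {y. dvd_at P x y}"
proof (rule is_idealI)
  show "0 \<in> {y. dvd_at P x y}"
    using maximal_ideal_one_notin[OF mP] unfolding dvd_at_def by (intro CollectI exI[of _ 1] exI[of _ 0]) simp
next
  fix y z assume "y \<in> {y. dvd_at P x y}" "z \<in> {y. dvd_at P x y}"
  then obtain s1 c1 s2 c2 where "s1 \<notin> P" "s2 \<notin> P" and h: "s1 * y = x * c1" "s2 * z = x * c2"
    unfolding dvd_at_def by blast
  have "(s1 * s2) * (y + z) = s2 * (s1 * y) + s1 * (s2 * z)"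
    by (simp add: algebra_simps)
  also have "\<dots> = x * (s2 * c1 + s1 * c2)"
    unfolding h by (simp add: algebra_simps)
  finally show "y + z \<in> {y. dvd_at P x y}"
    unfolding dvd_at_def using maximal_ideal_mult_notin[OF mP \<open>s1 \<notin> P\<close> \<open>s2 \<notin> P\<close>] by blast
next
  fix r y assume "y \<in> {y. dvd_at P x y}"
  then obtain s c where "s \<notin> P" "s * y = x * c"
    unfolding dvd_at_def by blast
  then have "s * (r * y) = x * (r * c)"
    by (metis mult.left_commute)
  with \<open>s \<notin> P\<close> show "r * y \<in> {y. dvd_at P x y}"
    unfolding dvd_at_def by blast
qed

lemma is_ideal_colon:
  assumes iI: "is_ideal I"
  shows "is_ideal {z. b * z \<in> I}"
proof (rule is_idealI)
  fix r z assume "z \<in> {z. b * z \<in> I}"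
  then show "r * z \<in> {z. b * z \<in> I}"
    using is_ideal_mult_left[OF iI, of "b * z" r] by (simp add: mult.left_commute)
qed (use iI is_ideal_zero is_ideal_add in \<open>auto simp: distrib_left\<close>)

lemma colon_maximal_prime:
  fixes I :: "'d::comm_ring_1 set"
  assumes iI: "is_ideal I" and "b \<notin> I"
    and maximal: "\<And>c. c \<notin> I \<Longrightarrow> {z. b * z \<in> I} \<subseteq> {z. c * z \<in> I} \<Longrightarrow> {z. c * z \<in> I} = {z. b * z \<in> I}"
  shows "prime_ideal {z. b * z \<in> I}"
  unfolding prime_ideal_def
proof (intro conjI allI impI)
  show "is_ideal {z. b * z \<in> I}"
    using iI by (rule is_ideal_colon)
  show "{z. b * z \<in> I} \<noteq> UNIV"
    using \<open>b \<notin> I\<close> by (metis UNIV_I mem_Collect_eq mult_1_right)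
next
  fix u v assume uv: "u * v \<in> {z. b * z \<in> I}"
  show "u \<in> {z. b * z \<in> I} \<or> v \<in> {z. b * z \<in> I}"
  proof (cases "u \<in> {z. b * z \<in> I}")
    case False
    moreover have "{z. b * z \<in> I} \<subseteq> {z. (b * u) * z \<in> I}"
    proof
      fix z assume "z \<in> {z. b * z \<in> I}"
      then have "u * (b * z) \<in> I"
        using is_ideal_mult_left[OF iI] by blast
      then show "z \<in> {z. (b * u) * z \<in> I}"
        by (simp add: ac_simps)
    qed
    ultimately have "{z. (b * u) * z \<in> I} = {z. b * z \<in> I}"
      using maximal[of "b * u"] by auto
    then show ?thesis
      using uv by (auto simp: mult.assoc)
  qed simp
qed

lemma dedekind_exists_ratio_outside_local_ring:
  fixes P :: "'d::idom set"
  assumes ded: "dedekind_domain TYPE('d)" and mP: "maximal_ideal P" and "a \<in> P" "a \<noteq> 0"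
  shows "\<exists>b. \<not> dvd_at P a b \<and> (\<forall>y\<in>P. dvd_at P a (b * y))"
proof -
  text \<open>With \<open>I = a D\<^sub>P \<inter> D\<close>, choose \<open>b \<notin> I\<close> with \<open>(I : b)\<close> maximal; this colon ideal is a
    prime containing \<open>a\<close>, hence equals \<open>P\<close>.\<close>
  define I where "I = {y. dvd_at P a y}"
  have iI: "is_ideal I"
    unfolding I_def using mP by (rule is_ideal_dvd_at)
  have "1 \<notin> I"
    using \<open>a \<in> P\<close> is_ideal_mult_right[OF maximal_ideal_is_ideal[OF mP]]
    unfolding I_def dvd_at_def by fastforce
  obtain b where "b \<notin> I"
    and b_max: "\<And>c. c \<notin> I \<Longrightarrow> {z. b * z \<in> I} \<subseteq> {z. c * z \<in> I} \<Longrightarrow> {z. c * z \<in> I} = {z. b * z \<in> I}"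
  proof -
    have "\<exists>M\<in>{{z. c * z \<in> I} | c. c \<notin> I}. \<forall>X\<in>{{z. c * z \<in> I} | c. c \<notin> I}. M \<subseteq> X \<longrightarrow> X = M"
      using ded \<open>1 \<notin> I\<close> is_ideal_colon[OF iI] unfolding dedekind_domain_def
      by (intro noetherian_ideal_family_has_maximal) blast+
    then show ?thesis
      using that by blast
  qed
  have "prime_ideal {z. b * z \<in> I}"
    using iI \<open>b \<notin> I\<close> b_max by (rule colon_maximal_prime)
  moreover have "a \<in> {z. b * z \<in> I}"
    using maximal_ideal_one_notin[OF mP] unfolding I_def dvd_at_def by (auto intro!: exI[of _ 1])
  ultimately have max_colon: "maximal_ideal {z. b * z \<in> I}"
    using ded \<open>a \<noteq> 0\<close> unfolding dedekind_domain_def by blast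
  have "{z. b * z \<in> I} \<subseteq> P"
  proof
    fix z assume "z \<in> {z. b * z \<in> I}"
    then obtain s c where "s \<notin> P" "s * (b * z) = a * c"
      unfolding I_def dvd_at_def by blast
    then have "(s * z) * b = a * c"
      by (simp add: ac_simps)
    with \<open>b \<notin> I\<close> \<open>s \<notin> P\<close> show "z \<in> P"
      using maximal_ideal_mult_notin[OF mP] unfolding I_def dvd_at_def by blast
  qed
  then have "{z. b * z \<in> I} = P"
    using max_colon mP unfolding maximal_ideal_def by blast
  then show ?thesis
    using \<open>b \<notin> I\<close> unfolding I_def by blast
qed

lemma mult_sum_power_diff:
  fixes a :: "'a::comm_semiring_1"
  shows "a * (\<Sum>i\<le>k. f i * a ^ (k - i)) = (\<Sum>i\<le>k. f i * a ^ (Suc k - i))"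
  unfolding sum_distrib_left
proof (rule sum.cong[OF refl])
  fix i assume "i \<in> {..k}"
  then have "Suc k - i = Suc (k - i)"
    by (simp add: Suc_diff_le)
  then show "a * (f i * a ^ (k - i)) = f i * a ^ (Suc k - i)"
    by (simp add: ac_simps)
qed

lemma integrally_closed_dvd_if_relation:
  fixes a b T :: "'d::idom"
  assumes ic: "integrally_closed TYPE('d)" and "a \<noteq> 0"
    and rel: "T * b ^ Suc K = (\<Sum>i\<le>K. d i * b ^ i * a ^ (Suc K - i))"
  shows "a dvd T * b"
proof -
  define c where "c i = - (d i * T ^ (K - i))" for i
  have "(T * b) ^ Suc K = T ^ K * (T * b ^ Suc K)"
    by (simp add: power_mult_distrib ac_simps)
  also have "\<dots> = (\<Sum>i\<le>K. T ^ K * (d i * b ^ i * a ^ (Suc K - i)))"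
    by (simp only: rel sum_distrib_left)
  also have "\<dots> = - (\<Sum>i<Suc K. c i * (T * b) ^ i * a ^ (Suc K - i))"
    unfolding lessThan_Suc_atMost sum_negf[symmetric]
  proof (rule sum.cong[OF refl])
    fix i assume "i \<in> {..K}"
    then have "T ^ K = T ^ (K - i) * T ^ i"
      by (simp add: power_add[symmetric])
    then show "T ^ K * (d i * b ^ i * a ^ (Suc K - i)) = - (c i * (T * b) ^ i * a ^ (Suc K - i))"
      unfolding c_def by (simp add: power_mult_distrib algebra_simps)
  qed
  finally have "(T * b) ^ Suc K + (\<Sum>i<Suc K. c i * (T * b) ^ i * a ^ (Suc K - i)) = 0"
    by simp
  then show ?thesis
    using ic \<open>a \<noteq> 0\<close> unfolding integrally_closed_def by blast
qed

text \<open>The ideal of those \<open>z\<close> for which \<open>z / a\<close> is a polynomial of degree at most \<open>k\<close> in \<open>b / a\<close>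
  with coefficients in \<open>D\<^sub>P\<close>.\<close>
definition ratio_poly_ideal :: "'d::comm_ring_1 set \<Rightarrow> 'd \<Rightarrow> 'd \<Rightarrow> nat \<Rightarrow> 'd set" where
  "ratio_poly_ideal P a b k =
     {z. \<exists>t d. t \<notin> P \<and> t * z * a ^ k = a * (\<Sum>i\<le>k. d i * b ^ i * a ^ (k - i))}"

lemma is_ideal_ratio_poly_ideal:
  assumes mP: "maximal_ideal P"
  shows "is_ideal (ratio_poly_ideal P a b k)"
proof (rule is_idealI)
  show "0 \<in> ratio_poly_ideal P a b k"
    unfolding ratio_poly_ideal_def using maximal_ideal_one_notin[OF mP]
    by (intro CollectI exI[of _ 1] exI[of _ "\<lambda>_. 0"]) simp
next
  fix x y assume "x \<in> ratio_poly_ideal P a b k" "y \<in> ratio_poly_ideal P a b k"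
  then obtain t1 d1 t2 d2 where h: "t1 \<notin> P" "t1 * x * a ^ k = a * (\<Sum>i\<le>k. d1 i * b ^ i * a ^ (k - i))"
    "t2 \<notin> P" "t2 * y * a ^ k = a * (\<Sum>i\<le>k. d2 i * b ^ i * a ^ (k - i))"
    unfolding ratio_poly_ideal_def by blast
  have "(t1 * t2) * (x + y) * a ^ k = t2 * (t1 * x * a ^ k) + t1 * (t2 * y * a ^ k)"
    by (simp add: algebra_simps)
  also have "\<dots> = a * (\<Sum>i\<le>k. (t2 * d1 i + t1 * d2 i) * b ^ i * a ^ (k - i))"
    using h by (simp add: sum_distrib_left sum.distrib algebra_simps)
  finally show "x + y \<in> ratio_poly_ideal P a b k"
    unfolding ratio_poly_ideal_def using maximal_ideal_mult_notin[OF mP h(1,3)]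
    by (intro CollectI exI[of _ "t1 * t2"] exI[of _ "\<lambda>i. t2 * d1 i + t1 * d2 i"]) simp
next
  fix r x assume "x \<in> ratio_poly_ideal P a b k"
  then obtain t d where h: "t \<notin> P" "t * x * a ^ k = a * (\<Sum>i\<le>k. d i * b ^ i * a ^ (k - i))"
    unfolding ratio_poly_ideal_def by blast
  have "t * (r * x) * a ^ k = r * (t * x * a ^ k)"
    by (simp add: ac_simps)
  also have "\<dots> = a * (\<Sum>i\<le>k. (r * d i) * b ^ i * a ^ (k - i))"
    using h by (simp add: sum_distrib_left algebra_simps)
  finally show "r * x \<in> ratio_poly_ideal P a b k"
    unfolding ratio_poly_ideal_def using h(1) by (intro CollectI exI[of _ t] exI[of _ "\<lambda>i. r * d i"]) simp
qed

lemma mono_ratio_poly_ideal: "mono (ratio_poly_ideal P a b)"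
  unfolding mono_iff_le_Suc
proof (intro allI subsetI)
  fix k z assume "z \<in> ratio_poly_ideal P a b k"
  then obtain t d where "t \<notin> P" and h: "t * z * a ^ k = a * (\<Sum>i\<le>k. d i * b ^ i * a ^ (k - i))"
    unfolding ratio_poly_ideal_def by blast
  define d' where "d' i = (if i \<le> k then d i else 0)" for i
  have "t * z * a ^ Suc k = a * (a * (\<Sum>i\<le>k. (d i * b ^ i) * a ^ (k - i)))"
    using h by (simp add: ac_simps)
  also have "\<dots> = a * (\<Sum>i\<le>k. d i * b ^ i * a ^ (Suc k - i))"
    by (simp only: mult_sum_power_diff)
  also have "\<dots> = a * (\<Sum>i\<le>Suc k. d' i * b ^ i * a ^ (Suc k - i))"
    by (simp add: d'_def)
  finally show "z \<in> ratio_poly_ideal P a b (Suc k)"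
    unfolding ratio_poly_ideal_def using \<open>t \<notin> P\<close> by (intro CollectI exI[of _ t] exI[of _ d']) simp
qed

text \<open>\<open>(b/a)\<^sup>k a \<in> P D\<^sub>P\<close> for all \<open>k\<close>.\<close>
lemma ratio_powers_in_maximal_ideal:
  fixes P :: "'d::comm_ring_1 set"
  assumes mP: "maximal_ideal P" and "a \<in> P"
    and into: "\<forall>y\<in>P. dvd_at P a (b * y)"
    and preserves: "\<forall>y\<in>P. \<forall>s c. s \<notin> P \<longrightarrow> s * (b * y) = a * c \<longrightarrow> c \<in> P"
  shows "\<exists>t w. t \<notin> P \<and> w \<in> P \<and> t * b ^ k * a = a ^ k * w"
proof (induction k)
  case 0
  show ?case
    using maximal_ideal_one_notin[OF mP] \<open>a \<in> P\<close> by (intro exI[of _ 1] exI[of _ a]) simp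
next
  case (Suc k)
  then obtain t w where tw: "t \<notin> P" "w \<in> P" "t * b ^ k * a = a ^ k * w"
    by blast
  obtain s c where sc: "s \<notin> P" "s * (b * w) = a * c"
    using into tw(2) unfolding dvd_at_def by blast
  have "(s * t) * b ^ Suc k * a = s * b * (t * b ^ k * a)"
    by (simp add: ac_simps)
  also have "\<dots> = a ^ k * (s * (b * w))"
    unfolding tw(3) by (simp add: ac_simps)
  also have "\<dots> = a ^ Suc k * c"
    using sc(2) by (simp add: ac_simps)
  finally show ?case
    using maximal_ideal_mult_notin[OF mP sc(1) tw(1)] preserves tw(2) sc by blast
qed

lemma dvd_at_if_ratio_preserves_maximal_ideal:
  fixes P :: "'d::idom set"
  assumes noeth: "noetherian_ring TYPE('d)" and ic: "integrally_closed TYPE('d)"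
    and mP: "maximal_ideal P" and "a \<in> P" "a \<noteq> 0"
    and into: "\<forall>y\<in>P. dvd_at P a (b * y)"
    and preserves: "\<forall>y\<in>P. \<forall>s c. s \<notin> P \<longrightarrow> s * (b * y) = a * c \<longrightarrow> c \<in> P"
  shows "dvd_at P a b"
proof -
  text \<open>Once the chain \<open>ratio_poly_ideal P a b\<close> stabilizes at \<open>K\<close>, \<open>(b/a)\<^sup>K\<^sup>+\<^sup>1\<close> is a
    \<open>D\<^sub>P\<close>-combination of lower powers, so \<open>b/a\<close> is integral over \<open>D\<^sub>P\<close>.\<close>
  obtain K where K: "\<And>k. ratio_poly_ideal P a b k \<subseteq> ratio_poly_ideal P a b K"
    using noetherian_mono_ideals_stabilize[OF noeth is_ideal_ratio_poly_ideal[OF mP] mono_ratio_poly_ideal]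
    by blast
  obtain t' w where "t' \<notin> P" and tw: "t' * b ^ Suc K * a = a ^ Suc K * w"
    using ratio_powers_in_maximal_ideal[OF mP \<open>a \<in> P\<close> into preserves] by blast
  have "w \<in> ratio_poly_ideal P a b (Suc K)"
  proof -
    define d where "d i = (if i = Suc K then t' else 0)" for i
    have "1 * w * a ^ Suc K = t' * b ^ Suc K * a"
      unfolding tw by simp
    also have "\<dots> = a * (t' * b ^ Suc K)"
      by (rule mult.commute)
    also have "t' * b ^ Suc K = (\<Sum>i\<le>Suc K. d i * b ^ i * a ^ (Suc K - i))"
      by (simp add: d_def)
    finally show ?thesis
      unfolding ratio_poly_ideal_def using maximal_ideal_one_notin[OF mP] by blast
  qed
  then obtain t d where "t \<notin> P" and td: "t * w * a ^ K = a * (\<Sum>i\<le>K. d i * b ^ i * a ^ (K - i))"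
    using K unfolding ratio_poly_ideal_def by blast
  have "a * ((t * t') * b ^ Suc K) = t * (t' * b ^ Suc K * a)"
    by (simp add: ac_simps)
  also have "\<dots> = a * (t * w * a ^ K)"
    unfolding tw by (simp add: ac_simps)
  finally have "(t * t') * b ^ Suc K = a * (\<Sum>i\<le>K. d i * b ^ i * a ^ (K - i))"
    using td \<open>a \<noteq> 0\<close> by simp
  then have "a dvd (t * t') * b"
    using integrally_closed_dvd_if_relation[OF ic \<open>a \<noteq> 0\<close>] by (simp add: mult_sum_power_diff)
  then show ?thesis
    unfolding dvd_at_def using maximal_ideal_mult_notin[OF mP \<open>t \<notin> P\<close> \<open>t' \<notin> P\<close>]
    by (metis dvdE)
qed

lemma dvd_at_if_ratio_unit:
  fixes P :: "'d::idom set"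
  assumes mP: "maximal_ideal P" and "b \<noteq> 0"
    and into: "\<forall>z\<in>P. dvd_at P a (b * z)"
    and unit: "s \<notin> P" "c \<notin> P" "s * (b * y) = a * c"
  shows "\<forall>z\<in>P. dvd_at P y z"
proof
  fix z assume "z \<in> P"
  then obtain s' c' where "s' \<notin> P" and h: "s' * (b * z) = a * c'"
    using into unfolding dvd_at_def by blast
  have "b * ((c * s') * z) = c * (s' * (b * z))"
    by (simp add: ac_simps)
  also have "\<dots> = c' * (s * (b * y))"
    using h unit(3) by (simp add: ac_simps)
  also have "\<dots> = b * ((s * c') * y)"
    by (simp add: ac_simps)
  finally have "(c * s') * z = y * (s * c')"
    using \<open>b \<noteq> 0\<close> by (simp add: ac_simps)
  then show "dvd_at P y z"
    unfolding dvd_at_def using maximal_ideal_mult_notin[OF mP unit(2) \<open>s' \<notin> P\<close>] by blast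
qed

lemma dedekind_maximal_ideal_locally_principal:
  fixes P :: "'d::idom set"
  assumes ded: "dedekind_domain TYPE('d)" and mP: "maximal_ideal P"
  shows "\<exists>\<pi>\<in>P. \<forall>x\<in>P. dvd_at P \<pi> x"
proof (cases "P = {0}")
  case True
  then show ?thesis
    unfolding dvd_at_def by (auto intro!: exI[of _ 1])
next
  case False
  then obtain a where "a \<in> P" "a \<noteq> 0"
    using is_ideal_zero[OF maximal_ideal_is_ideal[OF mP]] by blast
  then obtain b where b: "\<not> dvd_at P a b" "\<forall>y\<in>P. dvd_at P a (b * y)"
    using dedekind_exists_ratio_outside_local_ring[OF ded mP] by blast
  then have "b \<noteq> 0"
    using maximal_ideal_one_notin[OF mP] unfolding dvd_at_def by fastforce
  text \<open>If \<open>b / a\<close> mapped \<open>P D\<^sub>P\<close> into itself, it would be integral over \<open>D\<^sub>P\<close>; so it maps some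
    \<open>y \<in> P\<close> to a unit of \<open>D\<^sub>P\<close>, and this \<open>y\<close> generates \<open>P D\<^sub>P\<close>.\<close>
  have "\<exists>y\<in>P. \<exists>s c. s \<notin> P \<and> c \<notin> P \<and> s * (b * y) = a * c"
    using ded mP \<open>a \<in> P\<close> \<open>a \<noteq> 0\<close> b dvd_at_if_ratio_preserves_maximal_ideal[of P a b]
    unfolding dedekind_domain_def by blast
  then show ?thesis
    using dvd_at_if_ratio_unit[OF mP \<open>b \<noteq> 0\<close> b(2)] by blast
qed

section \<open>Artinian P-primary modules\<close>

lemma antimono_array_column_limits:
  fixes e :: "nat \<Rightarrow> nat \<Rightarrow> 'b::order"
  assumes anti_n: "\<And>i. antimono (e i)" and anti_i: "\<And>n. antimono (\<lambda>i. e i n)"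
    and I: "\<And>n i. I n \<le> i \<Longrightarrow> e i n = e (I n) n"
  shows "e (I n) n \<le> e i n" and "antimono (\<lambda>n. e (I n) n)"
proof -
  have "e (I n) n = e (max i (I n)) n"
    using I[of n "max i (I n)"] by (simp only: max.cobounded2)
  also have "\<dots> \<le> e i n"
    using antimonoD[OF anti_i, of i "max i (I n)"] by simp
  finally show "e (I n) n \<le> e i n" .
  show "antimono (\<lambda>n. e (I n) n)"
  proof
    fix n n' :: nat assume "n \<le> n'"
    let ?i = "max (I n) (I n')"
    have "e (I n') n' = e ?i n'" "e (I n) n = e ?i n"
      using I[of n' ?i] I[of n ?i] by (simp_all only: max.cobounded1 max.cobounded2)
    then show "e (I n') n' \<le> e (I n) n"
      using antimonoD[OF anti_n \<open>n \<le> n'\<close>] by simp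
  qed
qed

lemma antimono_array_eventually_const:
  fixes e :: "nat \<Rightarrow> nat \<Rightarrow> 'b::order"
  assumes dcc: "\<And>f :: nat \<Rightarrow> 'b. range f \<subseteq> R \<Longrightarrow> antimono f \<Longrightarrow> \<exists>N. \<forall>k\<ge>N. f k = f N"
    and in_R: "\<And>i n. e i n \<in> R"
    and anti_n: "\<And>i. antimono (e i)" and anti_i: "\<And>n. antimono (\<lambda>i. e i n)"
  shows "\<exists>N. \<forall>i\<ge>N. e i = e N"
proof -
  have "\<exists>N. \<forall>i\<ge>N. e i n = e N n" for n
    using dcc[of "\<lambda>i. e i n", OF _ anti_i] in_R by blast
  then obtain I where I: "\<And>n i. I n \<le> i \<Longrightarrow> e i n = e (I n) n"
    by metis
  text \<open>The column limits \<open>g n\<close> decrease and stabilize from \<open>n0\<close> on; beyond the rows where the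
    columns \<open>n \<le> n0\<close> have stabilized, every row equals \<open>g\<close>.\<close>
  define g where "g n = e (I n) n" for n
  have g_le: "g n \<le> e i n" and "antimono g" for i n
    unfolding g_def using antimono_array_column_limits[OF anti_n anti_i I] by blast+
  then obtain n0 where n0: "\<And>n. n0 \<le> n \<Longrightarrow> g n = g n0"
    using dcc[of g] in_R unfolding g_def by blast
  define N where "N = Max (I ` {..n0})"
  have I_le_N: "I n \<le> N" if "n \<le> n0" for n
    unfolding N_def using that by (intro Max_ge) auto
  have limit: "e i n = g n" if "N \<le> i" for i n
  proof (cases "n \<le> n0")
    case True
    then show ?thesis
      using I[of n i] I_le_N[of n] that unfolding g_def by simp
  next
    case False
    have "I n0 \<le> i"
      using I_le_N[of n0] that by simp
    then have "e i n \<le> g n0"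
      using I[of n0 i] antimonoD[OF anti_n, of n0 n i] False unfolding g_def by (simp only: not_le)
    then show ?thesis
      using n0[of n] False g_le[of n i] by simp
  qed
  show ?thesis
    using limit by (intro exI[of _ N]) auto
qed

lemma eventually_const_if_finite_steps:
  assumes "finite {i. f (Suc i) \<noteq> f i}"
  shows "\<exists>N. \<forall>k\<ge>N. f k = f N"
proof -
  obtain N where N: "\<And>i. f (Suc i) \<noteq> f i \<Longrightarrow> i < N"
    using assms unfolding finite_nat_set_iff_bounded by blast
  have "f k = f N" if "N \<le> k" for k
    using that
  proof (induction k rule: dec_induct)
    case (step k)
    then have "f (Suc k) = f k"
      using N[of k] by (meson not_le)
    with step.IH show ?case
      by simp
  qed simp
  then show ?thesis
    by blast
qed

locale module_at_maximal_ideal = module scale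
  for scale :: "'a::comm_ring_1 \<Rightarrow> 'b::ab_group_add \<Rightarrow> 'b" (infixr \<open>*s\<close> 75) +
  fixes P :: "'a set"
  assumes maximal: "maximal_ideal P"
begin

text \<open>Modulo \<open>span W\<close>, both \<open>x\<close> and \<open>y\<close> are multiples of \<open>w\<close>, and the coefficient of \<open>x\<close> is
  invertible modulo \<open>P\<close>.\<close>
lemma span_insert_congruent_multiple:
  assumes w: "\<forall>p\<in>P. p *s w = 0"
    and x: "x \<in> span (insert w W)" "x \<notin> span W" and y: "y \<in> span (insert w W)"
  shows "\<exists>k. y - k *s x \<in> span W"
proof -
  obtain kx where kx: "x - kx *s w \<in> span W"
    using x(1) span_insert by blast
  obtain ky where ky: "y - ky *s w \<in> span W"
    using y span_insert by blast
  have "kx \<notin> P"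
  proof
    assume "kx \<in> P"
    then show False
      using w kx x(2) by simp
  qed
  then obtain p e where "p \<in> P" "1 = p + kx * e"
    using maximal_ideal_complement_unit[OF maximal] by blast
  then have "w = (e * kx) *s w"
    using w by (metis add_cancel_right_left mult.commute scale_left_distrib scale_one)
  then have "(ky * e) *s (kx *s w) = ky *s w"
    by (metis mult.assoc scale_scale)
  then have "y - (ky * e) *s x = (y - ky *s w) - (ky * e) *s (x - kx *s w)"
    by (simp add: scale_right_diff_distrib)
  also have "\<dots> \<in> span W"
    using kx ky span_diff span_scale by blast
  finally show ?thesis ..
qed

text \<open>Only one step of \<open>V\<close> can be invisible in \<open>span W\<close>, since \<open>span (insert w W)\<close> is
  one-dimensional over \<open>span W\<close>.\<close>
lemma antimono_subspaces_hidden_step_unique: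
  assumes w: "\<forall>p\<in>P. p *s w = 0"
    and V: "\<And>i. subspace (V i)" "antimono V" "V 0 \<subseteq> span (insert w W)"
    and hidden: "V (Suc i) \<inter> span W = V i \<inter> span W" "V (Suc j) \<inter> span W = V j \<inter> span W"
    and "i < j" "V (Suc j) \<noteq> V j"
  shows "V (Suc i) = V i"
proof (rule ccontr)
  have anti: "V l \<subseteq> V k" if "k \<le> l" for k l
    using antimonoD[OF V(2) that] .
  assume "V (Suc i) \<noteq> V i"
  then obtain y where y: "y \<in> V i" "y \<notin> V (Suc i)"
    using anti[of i "Suc i"] by auto
  obtain x where x: "x \<in> V j" "x \<notin> V (Suc j)"
    using \<open>V (Suc j) \<noteq> V j\<close> anti[of j "Suc j"] by auto
  then have "x \<notin> span W"
    using hidden(2) by blast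
  moreover have "x \<in> span (insert w W)" "y \<in> span (insert w W)"
    using anti[of 0] V(3) x(1) y(1) by auto
  ultimately obtain k where k: "y - k *s x \<in> span W"
    using span_insert_congruent_multiple[OF w] by blast
  have "k *s x \<in> V (Suc i)"
    using anti[of "Suc i" j] \<open>i < j\<close> x(1) subspace_scale[OF V(1)] by auto
  moreover have "y - k *s x \<in> V i"
    using calculation anti[of i "Suc i"] y(1) subspace_diff[OF V(1)] by auto
  then have "y - k *s x \<in> V (Suc i)"
    using k hidden(1) by blast
  ultimately have "(y - k *s x) + k *s x \<in> V (Suc i)"
    using subspace_add[OF V(1)] by blast
  with y(2) show False
    by simp
qed

lemma finite_card_steps_le_card_span:
  assumes "finite W" "\<forall>w\<in>W. \<forall>p\<in>P. p *s w = 0"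
    and "\<And>i. subspace (V i)" "antimono V" "V 0 \<subseteq> span W"
  shows "finite {i. V (Suc i) \<noteq> V i} \<and> card {i. V (Suc i) \<noteq> V i} \<le> card W"
  using assms
proof (induction W arbitrary: V rule: finite_induct)
  case empty
  have "V i = {0}" for i
    using antimonoD[OF empty.prems(3), of 0 i] empty.prems(2,4) subspace_0 by auto
  then show ?case
    by simp
next
  case (insert w W)
  define V' where "V' i = V i \<inter> span W" for i
  have anti: "V j \<subseteq> V i" if "i \<le> j" for i j
    using antimonoD[OF insert.prems(3) that] .
  have IH: "finite {i. V' (Suc i) \<noteq> V' i} \<and> card {i. V' (Suc i) \<noteq> V' i} \<le> card W"
  proof (rule insert.IH)
    show "subspace (V' i)" for i
      unfolding V'_def using insert.prems(2) by (simp add: subspace_inter)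
    show "antimono V'"
      unfolding V'_def using anti by (auto intro: antimonoI)
  qed (use insert.prems(1) in \<open>auto simp: V'_def\<close>)
  define C where "C = {i. V (Suc i) \<noteq> V i \<and> V' (Suc i) = V' i}"
  have no_two: False if "i \<in> C" "j \<in> C" "i < j" for i j
    using antimono_subspaces_hidden_step_unique[of w V W i j] insert.prems(1-4) that
    unfolding C_def V'_def by simp
  have "C = {} \<or> (\<exists>i. C = {i})"
    using no_two by (metis insertI1 linorder_neqE_nat subsetI subset_singleton_iff)
  then have "finite C" "card C \<le> 1"
    by auto
  have "{i. V (Suc i) \<noteq> V i} \<subseteq> {i. V' (Suc i) \<noteq> V' i} \<union> C"
    unfolding C_def by blast
  moreover have "card ({i. V' (Suc i) \<noteq> V' i} \<union> C) \<le> card (insert w W)"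
    using IH card_Un_le[of "{i. V' (Suc i) \<noteq> V' i}" C] \<open>card C \<le> 1\<close> insert.hyps by simp
  ultimately show ?case
    using IH \<open>finite C\<close> by (meson card_mono finite_UnI finite_subset order_trans)
qed

end

locale P_primary_module = module_at_maximal_ideal +
  fixes \<pi>
  assumes P_module: "P_module scale P"
    and uniformizer_in: "\<pi> \<in> P" and uniformizer: "\<forall>x\<in>P. dvd_at P \<pi> x"
begin

definition socle :: "'b set" where
  "socle = {a. \<pi> *s a = 0}"

lemma scale_invertible_outside:
  assumes "s \<notin> P"
  shows "\<exists>e. e *s s *s a = a"
proof -
  obtain n where n: "\<forall>x\<in>ideal_pow P n. x *s a = 0"
    using P_module unfolding P_module_def by blast
  obtain p e where "p \<in> P" and pe: "1 = p + s * e"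
    using maximal_ideal_complement_unit[OF maximal assms] by blast
  define c where "c = e * (\<Sum>i<n. p ^ i)"
  have "1 - p ^ n = (1 - p) * (\<Sum>i<n. p ^ i)"
    by (rule one_diff_power_eq)
  also have "1 - p = s * e"
    using pe by (simp add: algebra_simps)
  finally have "1 = p ^ n + s * c"
    unfolding c_def by (simp add: algebra_simps)
  then have "a = (p ^ n + s * c) *s a"
    by simp
  also have "\<dots> = p ^ n *s a + c *s s *s a"
    by (simp add: scale_left_distrib mult.commute)
  also have "p ^ n *s a = 0"
    using n power_in_ideal_pow[OF \<open>p \<in> P\<close>] by blast
  finally have "c *s s *s a = a"
    by simp
  then show ?thesis ..
qed

lemma socle_annihilated:
  assumes "a \<in> socle" "p \<in> P"
  shows "p *s a = 0"
proof -
  obtain s c where "s \<notin> P" "s * p = \<pi> * c"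
    using uniformizer \<open>p \<in> P\<close> unfolding dvd_at_def by blast
  then have "s *s p *s a = c *s \<pi> *s a"
    by (simp add: mult.commute)
  also have "\<dots> = 0"
    using \<open>a \<in> socle\<close> unfolding socle_def by simp
  finally have "s *s p *s a = 0" .
  moreover obtain e where "e *s s *s p *s a = p *s a"
    using scale_invertible_outside[OF \<open>s \<notin> P\<close>] by blast
  ultimately show ?thesis
    by (metis scale_zero_right)
qed

lemma uniformizer_power_annihilates: "\<exists>n. \<pi> ^ n *s a = 0"
  using P_module power_in_ideal_pow[OF uniformizer_in] unfolding P_module_def by blast

lemma socle_chain_finite_steps:
  fixes V :: "nat \<Rightarrow> 'b set"
  assumes rank: "\<And>T. finite T \<Longrightarrow> T \<subseteq> socle \<Longrightarrow> \<exists>W. finite W \<and> card W \<le> r \<and> W \<subseteq> socle \<and> T \<subseteq> span W"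
    and V: "\<And>k. subspace (V k)" "\<And>k. V k \<subseteq> socle" "antimono V"
  shows "finite {i. V (Suc i) \<noteq> V i} \<and> card {i. V (Suc i) \<noteq> V i} \<le> r"
proof (rule finite_if_finite_subsets_card_bdd)
  fix T assume T: "T \<subseteq> {i. V (Suc i) \<noteq> V i}" "finite T"
  have "\<exists>v. v \<in> V i \<and> v \<notin> V (Suc i)" if "i \<in> T" for i
    using T(1) that antimonoD[OF V(3), of i "Suc i"] by auto
  then obtain v where v: "\<And>i. i \<in> T \<Longrightarrow> v i \<in> V i \<and> v i \<notin> V (Suc i)"
    by metis
  have "v ` T \<subseteq> socle"
    using v V(2) by (auto simp: subset_iff)
  then obtain W where W: "finite W" "card W \<le> r" "W \<subseteq> socle" "v ` T \<subseteq> span W"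
    using rank[of "v ` T"] T(2) by blast
  have steps: "finite {i. V (Suc i) \<inter> span W \<noteq> V i \<inter> span W} \<and>
        card {i. V (Suc i) \<inter> span W \<noteq> V i \<inter> span W} \<le> card W"
  proof (rule finite_card_steps_le_card_span)
    show "\<forall>w\<in>W. \<forall>p\<in>P. p *s w = 0"
      using W(3) socle_annihilated by blast
    show "subspace (V i \<inter> span W)" for i
      using V(1) by (simp add: subspace_inter)
    show "antimono (\<lambda>i. V i \<inter> span W)"
      using antimonoD[OF V(3)] by (auto intro: antimonoI)
  qed (use W(1) in simp_all)
  moreover have "T \<subseteq> {i. V (Suc i) \<inter> span W \<noteq> V i \<inter> span W}"
    using v W(4) by blast
  ultimately have "card T \<le> card {i. V (Suc i) \<inter> span W \<noteq> V i \<inter> span W}"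
    by (simp add: card_mono)
  with steps W(2) show "card T \<le> r"
    by linarith
qed

definition layer :: "nat \<Rightarrow> 'b set \<Rightarrow> 'b set" where
  "layer n M = {\<pi> ^ n *s m | m. m \<in> M \<and> \<pi> ^ Suc n *s m = 0}"

lemma layer_subset_socle: "layer n M \<subseteq> socle"
  unfolding layer_def socle_def by (auto simp: mult.commute)

lemma subspace_layer:
  assumes "subspace M"
  shows "subspace (layer n M)"
proof (rule subspaceI)
  show "0 \<in> layer n M"
    unfolding layer_def using subspace_0[OF assms] by force
next
  fix x y assume "x \<in> layer n M" "y \<in> layer n M"
  then obtain m1 m2 where "x = \<pi> ^ n *s m1" "m1 \<in> M" "\<pi> ^ Suc n *s m1 = 0"
    "y = \<pi> ^ n *s m2" "m2 \<in> M" "\<pi> ^ Suc n *s m2 = 0"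
    unfolding layer_def by blast
  then show "x + y \<in> layer n M"
    unfolding layer_def using subspace_add[OF assms]
    by (intro CollectI exI[of _ "m1 + m2"]) (simp add: scale_right_distrib)
next
  fix c x assume "x \<in> layer n M"
  then obtain m where m: "x = \<pi> ^ n *s m" "m \<in> M" "\<pi> ^ Suc n *s m = 0"
    unfolding layer_def by blast
  then have "c *s x = \<pi> ^ n *s c *s m" "\<pi> ^ Suc n *s c *s m = 0"
    using scale_left_commute by (simp_all only:) simp
  then show "c *s x \<in> layer n M"
    unfolding layer_def using subspace_scale[OF assms m(2)] by blast
qed

lemma layer_Suc_subset:
  assumes "subspace M"
  shows "layer (Suc n) M \<subseteq> layer n M"
proof
  fix x assume "x \<in> layer (Suc n) M"
  then obtain m where "x = \<pi> ^ Suc n *s m" "m \<in> M" "\<pi> ^ Suc (Suc n) *s m = 0"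
    unfolding layer_def by blast
  then show "x \<in> layer n M"
    unfolding layer_def using subspace_scale[OF assms]
    by (intro CollectI exI[of _ "\<pi> *s m"]) (simp add: ac_simps)
qed

lemma layer_mono: "M \<subseteq> M' \<Longrightarrow> layer n M \<subseteq> layer n M'"
  unfolding layer_def by blast

lemma eq_if_layers_eq:
  assumes M: "subspace M" "subspace M'" "M \<subseteq> M'" and layers: "\<And>n. layer n M = layer n M'"
  shows "M = M'"
proof -
  have "\<forall>x\<in>M'. \<pi> ^ n *s x = 0 \<longrightarrow> x \<in> M" for n
  proof (induction n)
    case 0
    then show ?case
      using subspace_0[OF M(1)] by simp
  next
    case (Suc n)
    show ?case
    proof (intro ballI impI)
      fix x assume x: "x \<in> M'" "\<pi> ^ Suc n *s x = 0"
      then have "\<pi> ^ n *s x \<in> layer n M"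
        using layers unfolding layer_def by blast
      then obtain y where y: "y \<in> M" "\<pi> ^ n *s x = \<pi> ^ n *s y"
        unfolding layer_def by blast
      have "x - y \<in> M'" "\<pi> ^ n *s (x - y) = 0"
        using subspace_diff[OF M(2) x(1)] y M(3) by (auto simp: scale_right_diff_distrib)
      then have "x - y \<in> M"
        using Suc.IH by blast
      then have "(x - y) + y \<in> M"
        using subspace_add[OF M(1)] y(1) by blast
      then show "x \<in> M"
        by simp
    qed
  qed
  then show ?thesis
    using M(3) uniformizer_power_annihilates by blast
qed

theorem artinian_if_socle_finite_rank:
  assumes rank: "\<And>T. finite T \<Longrightarrow> T \<subseteq> socle \<Longrightarrow> \<exists>W. finite W \<and> card W \<le> r \<and> W \<subseteq> socle \<and> T \<subseteq> span W"
  shows "artinian_module scale"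
  unfolding artinian_module_def
proof (intro allI impI)
  fix M :: "nat \<Rightarrow> 'b set"
  assume "\<forall>n. subspace (M n) \<and> M (Suc n) \<subseteq> M n"
  then have sub: "\<And>n. subspace (M n)" and "antimono M"
    by (auto simp: antimono_iff_le_Suc)
  have "\<exists>N. \<forall>i\<ge>N. (\<lambda>n. layer n (M i)) = (\<lambda>n. layer n (M N))"
  proof (rule antimono_array_eventually_const[where R = "{V. subspace V \<and> V \<subseteq> socle}"])
    show "\<exists>N. \<forall>k\<ge>N. f k = f N" if "range f \<subseteq> {V. subspace V \<and> V \<subseteq> socle}" "antimono f"
      for f :: "nat \<Rightarrow> 'b set"
      using that socle_chain_finite_steps[OF rank, of f] eventually_const_if_finite_steps[of f] by blast
    show "layer n (M i) \<in> {V. subspace V \<and> V \<subseteq> socle}" for i n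
      using subspace_layer[OF sub] layer_subset_socle by blast
    show "antimono (\<lambda>n. layer n (M i))" for i
      using layer_Suc_subset[OF sub] by (simp add: antimono_iff_le_Suc)
    show "antimono (\<lambda>i. layer n (M i))" for n
    proof (rule antimonoI)
      fix i j :: nat assume "i \<le> j"
      then show "layer n (M j) \<subseteq> layer n (M i)"
        using layer_mono antimonoD[OF \<open>antimono M\<close>] by blast
    qed
  qed
  then obtain N where N: "\<forall>i\<ge>N. (\<lambda>n. layer n (M i)) = (\<lambda>n. layer n (M N))"
    by blast
  have "M i = M N" if "N \<le> i" for i
  proof (rule eq_if_layers_eq[OF sub sub])
    show "M i \<subseteq> M N"
      using antimonoD[OF \<open>antimono M\<close> that] .
    show "layer n (M i) = layer n (M N)" for n
      using fun_cong[OF N[rule_format, OF that]] by simp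
  qed
  then show "\<exists>N. \<forall>n\<ge>N. M n = M N"
    by blast
qed

end

section \<open>DG-modules\<close>

lemma DG_span_superset: "S \<subseteq> DG_span scale G \<rho> S"
  unfolding DG_span_def by blast

lemma DG_span_minimal: "DG_submodule scale G \<rho> B \<Longrightarrow> S \<subseteq> B \<Longrightarrow> DG_span scale G \<rho> S \<subseteq> B"
  unfolding DG_span_def by blast

lemma DG_module_action_zero:
  assumes "DG_module scale G \<rho>" "g \<in> carrier G"
  shows "\<rho> g 0 = 0"
proof -
  have "\<rho> g 0 + \<rho> g 0 = \<rho> g 0 + 0"
    using assms unfolding DG_module_def by (metis add.right_neutral)
  then show ?thesis
    by simp
qed

context module
begin

lemma DG_submodule_DG_span: "DG_submodule scale G \<rho> (DG_span scale G \<rho> S)"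
  unfolding DG_submodule_def
proof (intro conjI ballI)
  show "subspace (DG_span scale G \<rho> S)"
    unfolding DG_span_def DG_submodule_def by (rule subspace_Inter) blast
next
  fix g b assume "g \<in> carrier G" "b \<in> DG_span scale G \<rho> S"
  then show "\<rho> g b \<in> DG_span scale G \<rho> S"
    unfolding DG_span_def DG_submodule_def by blast
qed

lemma DG_submodule_annihilator:
  assumes DG: "DG_module scale G \<rho>"
  shows "DG_submodule scale G \<rho> {a. c *s a = 0}"
  unfolding DG_submodule_def
proof (intro conjI ballI)
  show "subspace {a. c *s a = 0}"
  proof (rule subspaceI)
    fix k x assume "x \<in> {a. c *s a = 0}"
    moreover have "c *s k *s x = k *s (c *s x)"
      by (rule scale_left_commute)
    ultimately show "k *s x \<in> {a. c *s a = 0}"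
      by simp
  qed (simp_all add: scale_right_distrib)
next
  fix g a assume g: "g \<in> carrier G" and "a \<in> {a. c *s a = 0}"
  have "c *s \<rho> g a = \<rho> g (c *s a)"
    using DG g unfolding DG_module_def by simp
  also have "\<dots> = 0"
    using \<open>a \<in> {a. c *s a = 0}\<close> DG_module_action_zero[OF DG g] by simp
  finally show "\<rho> g a \<in> {a. c *s a = 0}"
    by simp
qed

lemma DG_submodule_span_orbit:
  assumes DG: "DG_module scale G \<rho>"
  shows "DG_submodule scale G \<rho> (span ((\<lambda>(g, x). \<rho> g x) ` (carrier G \<times> S)))"
    (is "DG_submodule scale G \<rho> (span ?orbit)")
  unfolding DG_submodule_def
proof (intro conjI ballI)
  fix g b assume g: "g \<in> carrier G" and "b \<in> span ?orbit"
  have "span ?orbit \<subseteq> {x. \<rho> g x \<in> span ?orbit}"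
  proof (rule span_minimal)
    show "?orbit \<subseteq> {x. \<rho> g x \<in> span ?orbit}"
    proof
      fix y assume "y \<in> ?orbit"
      then obtain h x where hx: "h \<in> carrier G" "x \<in> S" "y = \<rho> h x"
        by auto
      then have "\<rho> g y = \<rho> (g \<otimes>\<^bsub>G\<^esub> h) x"
        using DG g unfolding DG_module_def by simp
      moreover have "g \<otimes>\<^bsub>G\<^esub> h \<in> carrier G"
        using DG g hx(1) unfolding DG_module_def by (meson group.is_monoid monoid.m_closed)
      then have "\<rho> (g \<otimes>\<^bsub>G\<^esub> h) x \<in> ?orbit"
        using hx(2) by (intro image_eqI[where x = "(g \<otimes>\<^bsub>G\<^esub> h, x)"]) simp_all
      ultimately show "y \<in> {x. \<rho> g x \<in> span ?orbit}"
        using span_base by simp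
    qed
    have "\<rho> g (x + y) = \<rho> g x + \<rho> g y" "\<rho> g (c *s x) = c *s \<rho> g x" for x y c
      using DG g unfolding DG_module_def by blast+
    then show "subspace {x. \<rho> g x \<in> span ?orbit}"
      using DG_module_action_zero[OF DG g] by (intro subspaceI) (simp_all add: span_add span_scale span_zero)
  qed
  then show "\<rho> g b \<in> span ?orbit"
    using \<open>b \<in> span ?orbit\<close> by blast
qed simp

lemma DG_span_eq_span_orbit:
  assumes DG: "DG_module scale G \<rho>"
  shows "DG_span scale G \<rho> S = span ((\<lambda>(g, x). \<rho> g x) ` (carrier G \<times> S))"
    (is "_ = span ?orbit")
proof
  have "S \<subseteq> ?orbit"
  proof
    fix x assume "x \<in> S"
    moreover have "\<one>\<^bsub>G\<^esub> \<in> carrier G" "\<rho> \<one>\<^bsub>G\<^esub> x = x"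
      using DG unfolding DG_module_def by (auto intro: monoid.one_closed group.is_monoid)
    ultimately show "x \<in> ?orbit"
      by (intro image_eqI[where x = "(\<one>\<^bsub>G\<^esub>, x)"]) simp_all
  qed
  then have "S \<subseteq> span ?orbit"
    using span_superset by (rule order_trans)
  with DG_submodule_span_orbit[OF DG] show "DG_span scale G \<rho> S \<subseteq> span ?orbit"
    by (rule DG_span_minimal)
next
  have "subspace (DG_span scale G \<rho> S)"
    and closed: "\<And>g b. g \<in> carrier G \<Longrightarrow> b \<in> DG_span scale G \<rho> S \<Longrightarrow> \<rho> g b \<in> DG_span scale G \<rho> S"
    using DG_submodule_DG_span[of G \<rho> S] unfolding DG_submodule_def by blast+
  moreover have "?orbit \<subseteq> DG_span scale G \<rho> S"
    using closed DG_span_superset[of S scale G \<rho>] by auto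
  ultimately show "span ?orbit \<subseteq> DG_span scale G \<rho> S"
    using span_minimal by blast
qed

lemma sr_DG_finite_rank:
  assumes DG: "DG_module scale G \<rho>" and "finite (carrier G)" and sr: "sr_DG_eq scale G \<rho> r"
    and B: "DG_submodule scale G \<rho> B" and "finite T" "T \<subseteq> B"
  shows "\<exists>W. finite W \<and> card W \<le> card (carrier G) * r \<and> W \<subseteq> B \<and> T \<subseteq> span W"
proof -
  have "DG_fin_gen scale G \<rho> (DG_span scale G \<rho> T)"
    unfolding DG_fin_gen_def using DG_submodule_DG_span \<open>finite T\<close> by blast
  then obtain S where "finite S" "card S \<le> r" and S: "DG_span scale G \<rho> S = DG_span scale G \<rho> T"
    using sr unfolding sr_DG_eq_def by blast
  define W where "W = (\<lambda>(g, x). \<rho> g x) ` (carrier G \<times> S)"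
  have "finite W"
    unfolding W_def using \<open>finite (carrier G)\<close> \<open>finite S\<close> by simp
  moreover have "card W \<le> card (carrier G) * r"
  proof -
    have "card W \<le> card (carrier G \<times> S)"
      unfolding W_def by (rule card_image_le) (use \<open>finite (carrier G)\<close> \<open>finite S\<close> in simp)
    also have "\<dots> \<le> card (carrier G) * r"
      using \<open>card S \<le> r\<close> by (simp add: card_cartesian_product)
    finally show ?thesis .
  qed
  moreover have "span W = DG_span scale G \<rho> T"
    unfolding W_def using DG_span_eq_span_orbit[OF DG, of S] S by simp
  then have "W \<subseteq> B" "T \<subseteq> span W"
    using span_superset DG_span_minimal[OF B \<open>T \<subseteq> B\<close>] DG_span_superset[of T scale G \<rho>] by blast+
  ultimately show ?thesis
    by blast
qed

end

theorem lemma6: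
  fixes scale :: "'d::{idom, semiring_char_0} \<Rightarrow> 'a::ab_group_add \<Rightarrow> 'a"
    and G :: "('g, 'm) monoid_scheme"
    and \<rho> :: "'g \<Rightarrow> 'a \<Rightarrow> 'a"
    and P :: "'d set"
    and r :: nat
  assumes "group G" and "finite (carrier G)"
    and "dedekind_domain TYPE('d)"
    and "DG_module scale G \<rho>"
    and "maximal_ideal P"
    and "P_module scale P"
    and "residue_char_zero P"
    and "sr_DG_eq scale G \<rho> r"
  shows "artinian_module scale"
proof -
  interpret module scale
    using \<open>DG_module scale G \<rho>\<close> unfolding DG_module_def by blast
  obtain \<pi> where "\<pi> \<in> P" "\<forall>x\<in>P. dvd_at P \<pi> x"
    using dedekind_maximal_ideal_locally_principal[OF \<open>dedekind_domain TYPE('d)\<close> \<open>maximal_ideal P\<close>] by blast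
  interpret P_primary_module scale P \<pi>
    by unfold_locales fact+
  show ?thesis
  proof (rule artinian_if_socle_finite_rank)
    fix T assume "finite T" "T \<subseteq> socle"
    then show "\<exists>W. finite W \<and> card W \<le> card (carrier G) * r \<and> W \<subseteq> socle \<and> T \<subseteq> span W"
      using sr_DG_finite_rank[OF \<open>DG_module scale G \<rho>\<close> \<open>finite (carrier G)\<close> \<open>sr_DG_eq scale G \<rho> r\<close>
          DG_submodule_annihilator[OF \<open>DG_module scale G \<rho>\<close>]]
      unfolding socle_def by blast
  qed
qed

end
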